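(* Let $\alpha:\mathbb{C}\to\mathbb{C}$ be an exponential automorphism, i.e. a function satisfying $\alpha(z_1+z_2)=\alpha(z_1)+\alpha(z_2)$ and $\alpha(e^z)=e^{\alpha(z)}$ for all $z,z_1,z_2\in\mathbb{C}$. Then $\alpha$ is a field automorphism of $\mathbb{C}$, i.e. $\alpha(z_1+z_2)=\alpha(z_1)+\alpha(z_2)$, $\alpha(z_1z_2)=\alpha(z_1)\alpha(z_2)$ for all $z_1,z_2\in\mathbb{C}$, and $\alpha(1)=1$. *)

theory Defs
  imports Complex_Main
begin

end

theory Submission
  imports Defs "HOL-Analysis.Complex_Transcendental"
begin

lemma additive_exp_commuting_one:
  fixes \<alpha> :: "complex \<Rightarrow> complex"
  assumes "additive \<alpha>" and "\<And>z. \<alpha> (exp z) = exp (\<alpha> z)"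
  shows "\<alpha> 1 = 1"
  using assms(2)[of 0] additive.zero[OF assms(1)] by simp

lemma additive_exp_commuting_mult:
  fixes \<alpha> :: "complex \<Rightarrow> complex"
  assumes add: "additive \<alpha>" and exp_comm: "\<And>z. \<alpha> (exp z) = exp (\<alpha> z)"
  shows "\<alpha> (z * w) = \<alpha> z * \<alpha> w"
proof (cases "z = 0 \<or> w = 0")
  case True
  then show ?thesis using additive.zero[OF add] by auto
next
  case False
  then have z: "exp (Ln z) = z" and w: "exp (Ln w) = w" by auto
  have "\<alpha> (z * w) = \<alpha> (exp (Ln z + Ln w))"
    using z w by (simp add: exp_add)
  also have "\<dots> = exp (\<alpha> (Ln z) + \<alpha> (Ln w))"
    by (simp only: exp_comm additive.add[OF add])
  also have "\<dots> = exp (\<alpha> (Ln z)) * exp (\<alpha> (Ln w))"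
    by (rule exp_add)
  also have "\<dots> = \<alpha> z * \<alpha> w"
    by (simp flip: exp_comm add: z w)
  finally show ?thesis .
qed

theorem mainTheorem3:
  fixes \<alpha> :: "complex \<Rightarrow> complex"
  assumes add: "\<And>z1 z2. \<alpha> (z1 + z2) = \<alpha> z1 + \<alpha> z2"
    and expc: "\<And>z. \<alpha> (exp z) = exp (\<alpha> z)"
  shows "(\<forall>z1 z2. \<alpha> (z1 + z2) = \<alpha> z1 + \<alpha> z2) \<and>
         (\<forall>z1 z2. \<alpha> (z1 * z2) = \<alpha> z1 * \<alpha> z2) \<and>
         \<alpha> 1 = 1"
proof -
  have "additive \<alpha>"
    using add by (rule additive.intro)
  then show ?thesis
    using add expc additive_exp_commuting_mult additive_exp_commuting_one by blast
qed

end
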